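(* There exist absolute constants $c_1,c_2>0$ such that for all sufficiently large $n$ and all $\varepsilon\in(0,1]$ the following holds. Let $p$ be a distribution on $[n]$ with $d_{\mathrm{TV}}(p,\mathcal{U}_n) = \varepsilon$ and let $z=(p-\mathcal{U}_n)/\varepsilon$. Let the random set $S$ be generated as follows: choose $j$ uniformly at random from $\{1,\dots,\lfloor 2\log n\rfloor\}$, set $r=2^j$, and include each $i\in[n]$ in $S$ independently with probability $1/r$. Then with probability at least $c_1/\log n$, there exists $i\in S$ such that $$\left|\frac{\mathcal{U}_n(i) + \varepsilon z(i)}{\mathcal{U}_n(S) + \varepsilon z(S)} - \frac{\mathcal{U}_n(i)}{\mathcal{U}_n(S)}\right| \;=\; \left|p_S(i)-\frac{1}{|S|}\right| \;\geq\; c_2\,\varepsilon .$$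
   Context: $\mathcal{U}_n$ is the uniform distribution on $[n]$. For a vector $x\in\mathbb{R}^n$ and $S\subseteq[n]$, $x(S)=\sum_{i\in S}x(i)$; $p_S(i)=p(i)/p(S)$. Total variation distance: $d_{\mathrm{TV}}(p,q)=\frac12\sum_{i}|p(i)-q(i)|$. $\log$ is base 2. *)

theory Defs
  imports Complex_Main
begin

definition is_dist :: "nat \<Rightarrow> (nat \<Rightarrow> real) \<Rightarrow> bool" where
  "is_dist n p \<longleftrightarrow> (\<forall>i\<in>{1..n}. 0 \<le> p i) \<and> (\<Sum>i\<in>{1..n}. p i) = 1"

definition unif :: "nat \<Rightarrow> nat \<Rightarrow> real" where
  "unif n i = (if i \<in> {1..n} then 1 / real n else 0)"

definition dTV :: "nat \<Rightarrow> (nat \<Rightarrow> real) \<Rightarrow> (nat \<Rightarrow> real) \<Rightarrow> real" where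
  "dTV n p q = (1/2) * (\<Sum>i\<in>{1..n}. \<bar>p i - q i\<bar>)"

definition mass :: "(nat \<Rightarrow> real) \<Rightarrow> nat set \<Rightarrow> real" where
  "mass x S = (\<Sum>i\<in>S. x i)"

definition cond :: "(nat \<Rightarrow> real) \<Rightarrow> nat set \<Rightarrow> nat \<Rightarrow> real" where
  "cond p S i = p i / mass p S"

definition rand_set_prob :: "nat \<Rightarrow> (nat set \<Rightarrow> bool) \<Rightarrow> real" where
  "rand_set_prob n E =
     (let J = nat \<lfloor>2 * log 2 (real n)\<rfloor> in
      (1 / real J) * (\<Sum>j\<in>{1..J}.
         (let q = 1 / (2::real) ^ j in
          \<Sum>S\<in>{S. S \<subseteq> {1..n} \<and> E S}. q ^ card S * (1 - q) ^ (n - card S))))"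

end

theory Submission
  imports Defs
begin

text \<open>
  Write \<open>e(l) = n p(l) - 1\<close>, so that \<open>\<Sum> |e| = 2 \<epsilon> n\<close>, \<open>\<Sum> e = 0\<close>, \<open>e \<ge> -1\<close> and
  \<open>p\<^sub>S(i) = (1 + e(i)) / (|S| + e(S))\<close>. If one element \<open>i \<in> S\<close> has \<open>|e(i)|\<close> large compared
  with \<open>|S|\<close> and with \<open>\<Sum>\<^bsub>S - {i}\<^esub> |e|\<close>, then \<open>p\<^sub>S(i)\<close> is far from \<open>1/|S|\<close>.

  If the elements with \<open>|e| \<ge> 8192 \<epsilon>\<close> carry a quarter of the total deviation, sort them by
  the scale \<open>k = n/2\<^sup>j\<close> with \<open>|e(i)| \<ge> 128 \<epsilon> k\<close>: at rate \<open>2\<^sup>-\<^sup>j\<close> the sample has expected size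
  \<open>k\<close> and expected total deviation \<open>O(\<epsilon> k)\<close>, so by Markov's inequality it contains exactly one
  such \<open>i\<close> next to a tame remainder with probability proportional to their number; summed over
  the scales this is a constant. Otherwise a constant fraction of the elements have
  \<open>\<epsilon>/4 \<le> e \<le> 8192 \<epsilon>\<close> and another constant fraction \<open>-8192 \<epsilon> \<le> e \<le> -\<epsilon>/4\<close>, and at rate
  \<open>\<approx> 1/(4n)\<close> the sample is, with constant probability, a pair of one of each.
  Either way one of the \<open>\<lfloor>2 log n\<rfloor>\<close> scales succeeds with constant probability.
\<close>

section \<open>Bernoulli random subsets\<close>

definition bern_weight :: "real \<Rightarrow> 'a set \<Rightarrow> 'a set \<Rightarrow> real" where
  "bern_weight q A T = q ^ card T * (1 - q) ^ (card A - card T)"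

definition bern_exp :: "real \<Rightarrow> 'a set \<Rightarrow> ('a set \<Rightarrow> real) \<Rightarrow> real" where
  "bern_exp q A f = (\<Sum>T\<in>Pow A. bern_weight q A T * f T)"

abbreviation bern_prob :: "real \<Rightarrow> 'a set \<Rightarrow> ('a set \<Rightarrow> bool) \<Rightarrow> real" where
  "bern_prob q A P \<equiv> bern_exp q A (\<lambda>T. of_bool (P T))"

lemma bern_weight_nonneg: "0 \<le> q \<Longrightarrow> q \<le> 1 \<Longrightarrow> 0 \<le> bern_weight q A T"
  unfolding bern_weight_def by simp

lemma bern_exp_cong: "(\<And>T. T \<subseteq> A \<Longrightarrow> f T = g T) \<Longrightarrow> bern_exp q A f = bern_exp q A g"
  unfolding bern_exp_def by (rule sum.cong) auto

lemma bern_exp_mono: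
  "0 \<le> q \<Longrightarrow> q \<le> 1 \<Longrightarrow> (\<And>T. T \<subseteq> A \<Longrightarrow> f T \<le> g T) \<Longrightarrow> bern_exp q A f \<le> bern_exp q A g"
  unfolding bern_exp_def by (rule sum_mono) (auto intro!: mult_left_mono bern_weight_nonneg)

lemma bern_exp_nonneg: "0 \<le> q \<Longrightarrow> q \<le> 1 \<Longrightarrow> (\<And>T. T \<subseteq> A \<Longrightarrow> 0 \<le> f T) \<Longrightarrow> 0 \<le> bern_exp q A f"
  unfolding bern_exp_def by (rule sum_nonneg) (auto intro!: mult_nonneg_nonneg bern_weight_nonneg)

lemma bern_exp_add: "bern_exp q A (\<lambda>T. f T + g T) = bern_exp q A f + bern_exp q A g"
  unfolding bern_exp_def by (simp add: distrib_left sum.distrib)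

lemma bern_exp_diff: "bern_exp q A (\<lambda>T. f T - g T) = bern_exp q A f - bern_exp q A g"
  unfolding bern_exp_def by (simp add: right_diff_distrib sum_subtractf)

lemma bern_exp_cmult: "bern_exp q A (\<lambda>T. c * f T) = c * bern_exp q A f"
  unfolding bern_exp_def sum_distrib_left by (intro sum.cong) (simp_all add: mult.left_commute)

lemma bern_exp_sum: "finite I \<Longrightarrow> bern_exp q A (\<lambda>T. \<Sum>i\<in>I. f i T) = (\<Sum>i\<in>I. bern_exp q A (f i))"
  unfolding bern_exp_def sum_distrib_left by (rule sum.swap)

lemma bern_exp_insert:
  assumes "finite A" "x \<notin> A"
  shows "bern_exp q (insert x A) f = q * bern_exp q A (\<lambda>T. f (insert x T)) + (1 - q) * bern_exp q A f"
proof -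
  have weight_in: "bern_weight q (insert x A) (insert x T) = q * bern_weight q A T" if "T \<subseteq> A" for T
  proof -
    have "finite T" "x \<notin> T" "card T \<le> card A"
      using that assms finite_subset card_mono by blast+
    then show ?thesis using assms unfolding bern_weight_def by (simp add: Suc_diff_le)
  qed
  have weight_out: "bern_weight q (insert x A) T = (1 - q) * bern_weight q A T" if "T \<subseteq> A" for T
  proof -
    have "card T \<le> card A" using that assms card_mono by blast
    then show ?thesis using assms unfolding bern_weight_def by (simp add: Suc_diff_le)
  qed
  have "inj_on (insert x) (Pow A)"
    unfolding inj_on_def by (metis Diff_insert_absorb PowD assms(2) subset_iff)
  moreover have "Pow A \<inter> insert x ` Pow A = {}" using assms by auto
  ultimately have "bern_exp q (insert x A) f = (\<Sum>T\<in>Pow A. bern_weight q (insert x A) T * f T)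
      + (\<Sum>T\<in>Pow A. bern_weight q (insert x A) (insert x T) * f (insert x T))"
    unfolding bern_exp_def Pow_insert using assms by (simp add: sum.union_disjoint sum.reindex)
  also have "\<dots> = (1 - q) * bern_exp q A f + q * bern_exp q A (\<lambda>T. f (insert x T))"
    unfolding bern_exp_def sum_distrib_left
    by (intro arg_cong2[where f = "(+)"] sum.cong) (auto simp: weight_in weight_out)
  finally show ?thesis by simp
qed

lemma bern_exp_const: "finite A \<Longrightarrow> bern_exp q A (\<lambda>_. c) = c"
proof (induction A rule: finite_induct)
  case empty then show ?case by (simp add: bern_exp_def bern_weight_def)
next
  case (insert x A) then show ?case by (simp add: bern_exp_insert algebra_simps)
qed

lemma bern_exp_sum_elems: "finite A \<Longrightarrow> bern_exp q A (\<lambda>T. \<Sum>l\<in>T. g l) = q * (\<Sum>l\<in>A. g l)"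
proof (induction A rule: finite_induct)
  case empty then show ?case by (simp add: bern_exp_def bern_weight_def)
next
  case (insert x A)
  have "bern_exp q A (\<lambda>T. \<Sum>l\<in>insert x T. g l) = bern_exp q A (\<lambda>T. g x + (\<Sum>l\<in>T. g l))"
    using insert by (intro bern_exp_cong) (auto simp: finite_subset sum.insert_if)
  also have "\<dots> = g x + q * (\<Sum>l\<in>A. g l)" using insert by (simp add: bern_exp_add bern_exp_const)
  finally show ?case using insert by (simp add: bern_exp_insert algebra_simps)
qed

lemma bern_exp_card: "finite A \<Longrightarrow> bern_exp q A (\<lambda>T. real (card T)) = q * real (card A)"
  using bern_exp_sum_elems[of A q "\<lambda>_. 1"] by simp

lemma bern_exp_mem_mult:
  assumes "finite A" "x \<in> A"
  shows "bern_exp q A (\<lambda>T. of_bool (x \<in> T) * f T) = q * bern_exp q (A - {x}) (\<lambda>T. f (insert x T))"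
proof -
  have "bern_exp q (A - {x}) (\<lambda>T. of_bool (x \<in> T) * f T) = bern_exp q (A - {x}) (\<lambda>T. 0)"
    by (rule bern_exp_cong) auto
  moreover have "A = insert x (A - {x})" using assms by auto
  ultimately show ?thesis
    using assms bern_exp_insert[of "A - {x}" x q "\<lambda>T. of_bool (x \<in> T) * f T"]
    by (simp add: bern_exp_const)
qed

lemma bern_prob_mem: "finite A \<Longrightarrow> l \<in> A \<Longrightarrow> bern_prob q A (\<lambda>T. l \<in> T) = q"
  using bern_exp_mem_mult[of A l q "\<lambda>_. 1"] by (simp add: bern_exp_const)

lemma bern_prob_mem_pair:
  assumes "finite A" "i \<in> A" "l \<in> A" "i \<noteq> l"
  shows "bern_prob q A (\<lambda>T. i \<in> T \<and> l \<in> T) = q\<^sup>2"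
proof -
  have "bern_prob q A (\<lambda>T. i \<in> T \<and> l \<in> T) = bern_exp q A (\<lambda>T. of_bool (i \<in> T) * of_bool (l \<in> T))"
    by (rule bern_exp_cong) auto
  also have "\<dots> = q * bern_prob q (A - {i}) (\<lambda>T. l \<in> insert i T)"
    using assms(1,2) by (rule bern_exp_mem_mult)
  also have "bern_prob q (A - {i}) (\<lambda>T. l \<in> insert i T) = bern_prob q (A - {i}) (\<lambda>T. l \<in> T)"
    using assms(4) by (intro bern_exp_cong) simp
  also have "\<dots> = q" using assms by (intro bern_prob_mem) auto
  finally show ?thesis by (simp add: power2_eq_square)
qed

lemma bern_prob_eq: "finite A \<Longrightarrow> T0 \<subseteq> A \<Longrightarrow> bern_prob q A (\<lambda>T. T = T0) = bern_weight q A T0"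
  unfolding bern_exp_def by (simp add: if_distrib[of "\<lambda>x. _ * x"] sum.delta' cong: if_cong)

lemma bern_prob_empty: "finite A \<Longrightarrow> bern_prob q A (\<lambda>T. T = {}) = (1 - q) ^ card A"
  by (simp add: bern_prob_eq bern_weight_def)

lemma bern_prob_mono:
  "0 \<le> q \<Longrightarrow> q \<le> 1 \<Longrightarrow> (\<And>S. S \<subseteq> A \<Longrightarrow> P S \<Longrightarrow> Q S) \<Longrightarrow> bern_prob q A P \<le> bern_prob q A Q"
  by (intro bern_exp_mono) auto

lemma bern_prob_markov:
  assumes "0 \<le> q" "q \<le> 1" "t > 0" "\<And>T. T \<subseteq> A \<Longrightarrow> 0 \<le> f T"
  shows "bern_prob q A (\<lambda>T. f T > t) \<le> bern_exp q A f / t"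
proof -
  have "bern_prob q A (\<lambda>T. f T > t) \<le> bern_exp q A (\<lambda>T. (1/t) * f T)"
    using assms by (intro bern_exp_mono) (auto simp: field_simps)
  also have "\<dots> = bern_exp q A f / t" unfolding bern_exp_cmult by simp
  finally show ?thesis .
qed

lemma bern_prob_ge_sum_disjoint:
  assumes "finite I" "0 \<le> q" "q \<le> 1"
    and imp: "\<And>i S. S \<subseteq> A \<Longrightarrow> i \<in> I \<Longrightarrow> B i S \<Longrightarrow> E S"
    and disj: "\<And>i i' S. S \<subseteq> A \<Longrightarrow> i \<in> I \<Longrightarrow> i' \<in> I \<Longrightarrow> B i S \<Longrightarrow> B i' S \<Longrightarrow> i = i'"
  shows "(\<Sum>i\<in>I. bern_prob q A (B i)) \<le> bern_prob q A E"
proof -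
  have "(\<Sum>i\<in>I. of_bool (B i S)) \<le> (of_bool (E S) :: real)" if "S \<subseteq> A" for S
  proof -
    have "card {i\<in>I. B i S} \<le> 1"
      using disj[OF that] by (simp add: card_le_Suc0_iff_eq assms(1))
    moreover have "{i\<in>I. B i S} \<noteq> {} \<Longrightarrow> E S" using imp[OF that] by blast
    ultimately show ?thesis using assms(1) by (auto simp: Int_def)
  qed
  then have "bern_exp q A (\<lambda>S. \<Sum>i\<in>I. of_bool (B i S)) \<le> bern_prob q A E"
    by (rule bern_exp_mono[OF assms(2,3)])
  then show ?thesis by (simp only: bern_exp_sum[OF assms(1)])
qed
lemma power_one_minus_le_inverse:
  fixes q :: real
  assumes "0 \<le> q" "q \<le> 1"
  shows "(1 - q) ^ m \<le> 1 / (1 + q * real m)"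
proof -
  have "(1 - q) ^ m * (1 + q) ^ m = (1 - q\<^sup>2) ^ m"
    by (simp add: power_mult_distrib[symmetric] algebra_simps power2_eq_square)
  also have "\<dots> \<le> 1" using assms by (intro power_le_one) (auto simp: power2_eq_square mult_le_one)
  finally have "(1 - q) ^ m * (1 + q) ^ m \<le> 1" .
  moreover have "1 + q * real m \<le> (1 + q) ^ m"
    using Bernoulli_inequality[of q m] assms by (simp add: mult.commute)
  moreover have "0 \<le> (1 - q) ^ m" using assms by simp
  ultimately have "(1 - q) ^ m * (1 + q * real m) \<le> 1"
    by (meson mult_left_mono order_trans)
  moreover have "0 < 1 + q * real m" using assms by (simp add: add_pos_nonneg)
  ultimately show ?thesis by (simp add: field_simps)
qed

lemma bern_weight_pair_ge:
  assumes "a \<noteq> b" "0 \<le> q" "q \<le> 1" "q * real (card A) \<le> 1/2"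
  shows "bern_weight q A {a, b} \<ge> q\<^sup>2 / 2"
proof -
  have "1 - real (card A - 2) * q \<le> (1 - q) ^ (card A - 2)"
    using Bernoulli_inequality[of "-q" "card A - 2"] assms by simp
  moreover have "real (card A - 2) * q \<le> q * real (card A)"
    using assms by (simp add: mult.commute mult_left_mono)
  ultimately have "(1 - q) ^ (card A - 2) \<ge> 1/2" using assms(4) by linarith
  then have "q\<^sup>2 * (1 - q) ^ (card A - 2) \<ge> q\<^sup>2 * (1/2)" by (intro mult_left_mono) auto
  moreover have "card {a, b} = 2" using assms(1) by simp
  ultimately show ?thesis unfolding bern_weight_def by simp
qed

text \<open>The error term accounts for the pairs \<open>{i, l} \<subseteq> S\<close> with \<open>l \<in> G\<close>.\<close>

lemma bern_prob_isolated_mem: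
  assumes A: "finite A" "i \<in> A" and G: "G \<subseteq> A" and q: "0 \<le> q" "q \<le> 1"
  shows "bern_prob q A (\<lambda>S. i \<in> S \<and> P (S - {i}) \<and> (\<forall>l\<in>G - {i}. l \<notin> S))
    \<ge> q * bern_prob q (A - {i}) P - q\<^sup>2 * real (card G)"
proof -
  define B where "B S \<longleftrightarrow> i \<in> S \<and> P (S - {i}) \<and> (\<forall>l\<in>G - {i}. l \<notin> S)" for S
  have finG: "finite G" using A G finite_subset by blast
  have pointwise: "of_bool (i \<in> S) * of_bool (P (S - {i}))
      - (\<Sum>l\<in>G - {i}. of_bool (i \<in> S \<and> l \<in> S)) \<le> (of_bool (B S) :: real)" for S
  proof -
    have nonneg: "0 \<le> (\<Sum>l\<in>G - {i}. (of_bool (i \<in> S \<and> l \<in> S) :: real))"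
      by (rule sum_nonneg) simp
    consider "B S" | "\<not> (i \<in> S \<and> P (S - {i}))" | l where "i \<in> S" "l \<in> G - {i}" "l \<in> S"
      unfolding B_def by blast
    then show ?thesis
    proof cases
      case 1
      then have "(of_bool (B S) :: real) = 1" by simp
      moreover have "(of_bool (i \<in> S) * of_bool (P (S - {i})) :: real) \<le> 1" by simp
      ultimately show ?thesis using nonneg by linarith
    next
      case 2
      then show ?thesis using nonneg by auto
    next
      case 3
      then have "(of_bool (i \<in> S \<and> l \<in> S) :: real) \<le> (\<Sum>l\<in>G - {i}. of_bool (i \<in> S \<and> l \<in> S))"
        using finG by (intro member_le_sum) auto
      then show ?thesis using 3 by simp
    qed
  qed
  have "bern_exp q A (\<lambda>S. of_bool (i \<in> S) * of_bool (P (S - {i})))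
      = q * bern_prob q (A - {i}) (\<lambda>T. P (insert i T - {i}))"
    using A by (rule bern_exp_mem_mult)
  also have "bern_prob q (A - {i}) (\<lambda>T. P (insert i T - {i})) = bern_prob q (A - {i}) P"
    by (rule bern_exp_cong) (simp add: insert_Diff_if subset_Diff_insert)
  finally have first: "bern_exp q A (\<lambda>S. of_bool (i \<in> S) * of_bool (P (S - {i})))
      = q * bern_prob q (A - {i}) P" .
  have "(\<Sum>l\<in>G - {i}. bern_prob q A (\<lambda>S. i \<in> S \<and> l \<in> S)) = (\<Sum>l\<in>G - {i}. q\<^sup>2)"
    using A G by (intro sum.cong refl bern_prob_mem_pair) auto
  also have "\<dots> = real (card (G - {i})) * q\<^sup>2" by simp
  also have "\<dots> \<le> real (card G) * q\<^sup>2"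
    using finG by (intro mult_right_mono) (auto simp: card_Diff_subset_Int)
  finally have pairs: "(\<Sum>l\<in>G - {i}. bern_prob q A (\<lambda>S. i \<in> S \<and> l \<in> S)) \<le> q\<^sup>2 * real (card G)"
    by (simp add: mult.commute)
  have "bern_exp q A (\<lambda>S. of_bool (i \<in> S) * of_bool (P (S - {i}))
      - (\<Sum>l\<in>G - {i}. of_bool (i \<in> S \<and> l \<in> S))) \<le> bern_prob q A B"
    using q pointwise by (intro bern_exp_mono) auto
  then have "q * bern_prob q (A - {i}) P - (\<Sum>l\<in>G - {i}. bern_prob q A (\<lambda>S. i \<in> S \<and> l \<in> S))
      \<le> bern_prob q A B"
    using finG by (simp only: bern_exp_diff bern_exp_sum finite_Diff first)
  with pairs show ?thesis unfolding B_def by linarith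
qed

section \<open>Sampling scales\<close>

lemma exists_power2_between:
  fixes t :: real
  assumes "t \<ge> 1"
  shows "\<exists>j. t \<le> 2 ^ j \<and> 2 ^ j < 2 * t"
proof -
  obtain m where "t < 2 ^ m" using real_arch_pow[of 2 t] by auto
  define j where "j = (LEAST j::nat. t \<le> 2 ^ j)"
  have "t \<le> 2 ^ j" unfolding j_def by (rule LeastI[of _ m]) (use \<open>t < 2 ^ m\<close> in simp)
  moreover have "2 ^ j < 2 * t"
  proof (cases j)
    case 0 then show ?thesis using assms by simp
  next
    case (Suc i)
    have "\<not> t \<le> 2 ^ i"
    proof
      assume "t \<le> 2 ^ i"
      then have "j \<le> i" unfolding j_def by (rule Least_le)
      then show False using Suc by simp
    qed
    then show ?thesis using Suc by simp
  qed
  ultimately show ?thesis by blast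
qed

lemma sum_min_ge_min_sum:
  fixes a :: "'a \<Rightarrow> real"
  assumes "finite I" "\<And>j. j \<in> I \<Longrightarrow> a j \<ge> 0" "c \<ge> 0"
  shows "(\<Sum>j\<in>I. min (a j) c) \<ge> min (\<Sum>j\<in>I. a j) c"
proof (cases "\<exists>j\<in>I. a j \<ge> c")
  case True
  then obtain j where j: "j \<in> I" "a j \<ge> c" by auto
  have "c = min (a j) c" using j by simp
  also have "\<dots> \<le> (\<Sum>j\<in>I. min (a j) c)" using assms j by (intro member_le_sum) auto
  finally show ?thesis by linarith
next
  case False
  then have "(\<Sum>j\<in>I. min (a j) c) = (\<Sum>j\<in>I. a j)" by (intro sum.cong) auto
  then show ?thesis by linarith
qed

definition num_scales :: "nat \<Rightarrow> nat" where
  "num_scales n = nat \<lfloor>2 * log 2 (real n)\<rfloor>"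

lemma rand_set_prob_eq_bern_prob:
  "rand_set_prob n E = (1 / real (num_scales n)) * (\<Sum>j\<in>{1..num_scales n}. bern_prob (1 / 2 ^ j) {1..n} E)"
proof -
  have "(\<Sum>S\<in>{S. S \<subseteq> {1..n} \<and> E S}. q ^ card S * (1 - q) ^ (n - card S)) = bern_prob q {1..n} E"
    for q :: real
  proof -
    have "{S. S \<subseteq> {1..n} \<and> E S} = {S\<in>Pow {1..n}. E S}" by auto
    then have "(\<Sum>S\<in>{S. S \<subseteq> {1..n} \<and> E S}. q ^ card S * (1 - q) ^ (n - card S))
       = (\<Sum>S\<in>Pow {1..n}. if E S then q ^ card S * (1 - q) ^ (n - card S) else 0)"
      by (simp only: sum.inter_filter finite_Pow_iff finite_atLeastAtMost)
    then show ?thesis unfolding bern_exp_def bern_weight_def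
      by (simp add: of_bool_def if_distrib cong: if_cong)
  qed
  then show ?thesis unfolding rand_set_prob_def num_scales_def Let_def by simp
qed

lemma le_num_scales:
  assumes "n \<ge> 2" "(2::real) ^ j < real n ^ 2"
  shows "j \<le> num_scales n"
proof -
  have "log 2 ((2::real) ^ j) < log 2 (real n ^ 2)" using assms by (subst log_less_cancel_iff) auto
  then have "real j < 2 * log 2 (real n)" using assms by (simp add: log_nat_power)
  then show ?thesis unfolding num_scales_def by linarith
qed

lemma num_scales_bounds:
  assumes "n \<ge> 2"
  shows "num_scales n \<ge> 1" "real (num_scales n) \<le> 2 * log 2 (real n)"
proof -
  have "log 2 (real n) \<ge> log 2 2" using assms by (subst log_le_cancel_iff) auto
  then have "2 * log 2 (real n) \<ge> 2" by simp
  moreover have "real_of_int \<lfloor>2 * log 2 (real n)\<rfloor> \<le> 2 * log 2 (real n)" by (rule of_int_floor_le)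
  ultimately show "num_scales n \<ge> 1" "real (num_scales n) \<le> 2 * log 2 (real n)"
    unfolding num_scales_def by linarith+
qed

lemma exists_scale:
  fixes x \<epsilon> :: real
  assumes n: "n \<ge> 2" and e0: "0 < \<epsilon>" and xb: "8192*\<epsilon> \<le> x" and xt: "x \<le> 2*\<epsilon>*real n"
  shows "\<exists>j\<in>{1..num_scales n}. real n / 2^j \<ge> 32 \<and> 128*\<epsilon>*(real n / 2^j) \<le> x
            \<and> 1/2^j \<ge> x / (256*\<epsilon>*real n)"
proof -
  define t where "t = 128*\<epsilon>*real n / x"
  have n0: "real n > 0" using n by simp
  have x0: "x > 0" using xb e0 by linarith
  have t64: "t \<ge> 64" unfolding t_def using xt x0 e0 by (simp add: field_simps)
  obtain j where j: "t \<le> 2^j" "2^j < 2*t" using exists_power2_between[of t] t64 by auto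
  have "j \<ge> 1" using j(1) t64 by (cases j) auto
  moreover have "(2::real)^j < real n ^ 2"
  proof -
    have "2*t \<le> real n / 32" unfolding t_def using xb x0 n0 e0 by (simp add: field_simps)
    also have "\<dots> \<le> real n ^ 2" using n by (simp add: power2_eq_square field_simps)
    finally show ?thesis using j(2) by simp
  qed
  then have "j \<le> num_scales n" by (intro le_num_scales[OF n])
  moreover have "real n / 2^j > 32"
  proof -
    have "real n / (2*t) < real n / 2^j" using j(2) n0 t64 by (intro divide_strict_left_mono) auto
    moreover have "real n / (2*t) \<ge> 32" unfolding t_def using xb x0 e0 n0 by (simp add: field_simps)
    ultimately show ?thesis by linarith
  qed
  moreover have "128*\<epsilon>*(real n / 2^j) \<le> x"
  proof -
    have "real n / 2^j \<le> real n / t" using j(1) t64 n0 by (intro divide_left_mono) auto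
    then have "128*\<epsilon>*(real n / 2^j) \<le> 128*\<epsilon>*(real n / t)" using e0 by (intro mult_left_mono) auto
    also have "128*\<epsilon>*(real n / t) = x" unfolding t_def using e0 n0 by simp
    finally show ?thesis .
  qed
  moreover have "1/2^j \<ge> x / (256*\<epsilon>*real n)"
  proof -
    have "1/(2*t) < 1/2^j" using j(2) t64 by (intro divide_strict_left_mono) auto
    moreover have "1/(2*t) = x / (256*\<epsilon>*real n)" unfolding t_def using e0 n0 by simp
    ultimately show ?thesis by simp
  qed
  ultimately show ?thesis by (intro bexI[of _ j]) auto
qed

section \<open>Deviation of the conditional distribution\<close>

definition rel_dev :: "nat \<Rightarrow> (nat \<Rightarrow> real) \<Rightarrow> nat \<Rightarrow> real" where
  "rel_dev n p l = real n * p l - 1"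

definition deviating :: "nat \<Rightarrow> (nat \<Rightarrow> real) \<Rightarrow> real \<Rightarrow> real \<Rightarrow> nat set \<Rightarrow> bool" where
  "deviating n p \<epsilon> c S \<longleftrightarrow> (let z = (\<lambda>i. (p i - unif n i) / \<epsilon>) in
     mass p S > 0 \<and> (\<exists>i\<in>S.
       \<bar>(unif n i + \<epsilon> * z i) / (mass (unif n) S + \<epsilon> * mass z S) - unif n i / mass (unif n) S\<bar> \<ge> c
       \<and> \<bar>cond p S i - 1 / real (card S)\<bar> \<ge> c))"

lemma mass_eq_rel_dev:
  "n \<ge> 1 \<Longrightarrow> mass p S = (real (card S) + (\<Sum>l\<in>S. rel_dev n p l)) / real n"
  unfolding mass_def rel_dev_def
  by (cases "finite S") (simp_all add: sum_subtractf sum_distrib_left[symmetric] field_simps)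

lemma cond_eq_rel_dev:
  "n \<ge> 1 \<Longrightarrow> cond p S i = (1 + rel_dev n p i) / (real (card S) + (\<Sum>l\<in>S. rel_dev n p l))"
  unfolding cond_def mass_eq_rel_dev by (simp add: rel_dev_def field_simps)

text \<open>
  On subsets of \<open>[n]\<close> the two quantities in the event coincide: \<open>U\<^sub>n + \<epsilon> z = p\<close> and
  \<open>U\<^sub>n(i) / U\<^sub>n(S) = 1/|S|\<close>.
\<close>

lemma deviating_if_cond_dev:
  assumes "S \<subseteq> {1..n}" "i \<in> S" "\<epsilon> \<noteq> 0" "mass p S > 0" "c \<le> \<bar>cond p S i - 1 / real (card S)\<bar>"
  shows "deviating n p \<epsilon> c S"
proof -
  have "finite S" using assms(1) finite_subset by blast
  then have "card S \<ge> 1" using assms(2) by (metis One_nat_def Suc_leI card_gt_0_iff empty_iff)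
  have unif_S: "unif n l = 1 / real n" if "l \<in> S" for l using that assms(1) by (auto simp: unif_def)
  then have "mass (unif n) S = real (card S) / real n" unfolding mass_def by simp
  then have "unif n i / mass (unif n) S = 1 / real (card S)"
    using unif_S[OF assms(2)] assms(1,2) \<open>card S \<ge> 1\<close> by auto
  moreover have "mass (unif n) S + \<epsilon> * mass (\<lambda>i. (p i - unif n i) / \<epsilon>) S = mass p S"
    using assms(3) by (simp add: mass_def sum_distrib_left sum_subtractf)
  ultimately show ?thesis
    unfolding deviating_def Let_def using assms(2-5)
    by (intro conjI bexI[of _ i]) (simp_all add: cond_def)
qed

lemma deviating_mono: "deviating n p \<epsilon> c S \<Longrightarrow> c' \<le> c \<Longrightarrow> deviating n p \<epsilon> c' S"
  unfolding deviating_def Let_def by (meson order_trans)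

text \<open>
  The ratio \<open>(1 + a) / (s + a + R)\<close> is \<open>p\<^sub>S(i)\<close> for \<open>|S| = s\<close>, \<open>e(i) = a\<close> and \<open>e(S - {i}) = R\<close>.
\<close>

lemma ratio_dev_outlier:
  fixes s a R \<epsilon> k :: real
  assumes s2: "s \<ge> 2" and sk: "s \<le> 16*k+1" and k1: "k \<ge> 1" and R: "\<bar>R\<bar> \<le> 64*\<epsilon>*k"
    and a1: "a \<ge> -1" and ak: "128*\<epsilon>*k \<le> \<bar>a\<bar>" and e0: "0 < \<epsilon>" and e1: "\<epsilon> \<le> 1"
  shows "s + a + R > 0 \<and> \<bar>(1+a)/(s+a+R) - 1/s\<bar> \<ge> \<epsilon>/12"
proof -
  define X where "X = s + a + R"
  have Ra: "\<bar>R\<bar> \<le> \<bar>a\<bar>/2" using R ak by linarith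
  have X: "X > 0"
  proof (cases "a \<ge> 0")
    case True then show ?thesis using Ra s2 unfolding X_def by linarith
  next
    case False then have "\<bar>a\<bar> \<le> 1" using a1 by linarith
    then show ?thesis using Ra s2 a1 unfolding X_def by linarith
  qed
  have Xle: "X \<le> s + 2*\<bar>a\<bar>" using Ra unfolding X_def by linarith
  have num: "\<bar>(s-1)*a - R\<bar> \<ge> s*\<bar>a\<bar>/4"
  proof -
    have "\<bar>(s-1)*a\<bar> = (s-1)*\<bar>a\<bar>" using s2 by (simp add: abs_mult)
    moreover have "((s-1) - 1/2) * \<bar>a\<bar> \<ge> (s/4) * \<bar>a\<bar>"
      using s2 by (intro mult_right_mono) auto
    moreover have "\<bar>(s-1)*a\<bar> - \<bar>R\<bar> \<le> \<bar>(s-1)*a - R\<bar>" by (rule abs_triangle_ineq2)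
    ultimately show ?thesis using Ra by (simp add: algebra_simps)
  qed
  have sX: "s*X > 0" using X s2 by simp
  have "(1+a)/X - 1/s = ((s-1)*a - R)/(s*X)"
    using X s2 unfolding X_def by (simp add: field_simps)
  then have eq: "\<bar>(1+a)/X - 1/s\<bar> = \<bar>(s-1)*a - R\<bar>/(s*X)"
    using sX by (simp add: abs_divide)
  have "(\<bar>a\<bar>/4)/(s + 2*\<bar>a\<bar>) \<le> (\<bar>a\<bar>/4)/X"
    using X Xle by (intro divide_left_mono) auto
  also have "\<dots> = (s*\<bar>a\<bar>/4)/(s*X)" using s2 by simp
  also have "\<dots> \<le> \<bar>(1+a)/X - 1/s\<bar>"
    unfolding eq using num sX by (intro divide_right_mono) auto
  finally have main: "\<bar>(1+a)/X - 1/s\<bar> \<ge> (\<bar>a\<bar>/4)/(s + 2*\<bar>a\<bar>)" .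
  have "(\<bar>a\<bar>/4)/(s + 2*\<bar>a\<bar>) \<ge> \<epsilon>/12"
  proof (cases "\<bar>a\<bar> \<ge> s")
    case True
    have "(\<bar>a\<bar>/4)/(s + 2*\<bar>a\<bar>) \<ge> (\<bar>a\<bar>/4)/(3*\<bar>a\<bar>)"
      using True s2 by (intro divide_left_mono) auto
    moreover have "(\<bar>a\<bar>/4)/(3*\<bar>a\<bar>) = 1/12" using True s2 by simp
    ultimately show ?thesis using e1 by linarith
  next
    case False
    have "(\<bar>a\<bar>/4)/(s + 2*\<bar>a\<bar>) \<ge> (\<bar>a\<bar>/4)/(3*s)"
      using False s2 by (intro divide_left_mono) auto
    moreover have "(\<bar>a\<bar>/4)/(3*s) \<ge> (128*\<epsilon>*k/4)/(3*(17*k))"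
      using ak sk k1 s2 e0 by (intro frac_le) auto
    moreover have "(128*\<epsilon>*k/4)/(3*(17*k)) = (32/51)*\<epsilon>" using k1 by simp
    ultimately show ?thesis using e0 by linarith
  qed
  with X main show ?thesis unfolding X_def by linarith
qed

lemma ratio_dev_pair:
  fixes x y \<epsilon> M :: real
  assumes x: "\<epsilon>/4 \<le> x" "x \<le> M*\<epsilon>" and y: "y \<le> -\<epsilon>/4" "y \<ge> -1"
    and e: "0 < \<epsilon>" "\<epsilon> \<le> 1" and M: "M \<ge> 0"
  shows "2 + x + y > 0 \<and> \<bar>(1+x)/(2+x+y) - 1/2\<bar> \<ge> \<epsilon>/(4*(2+M))"
proof -
  have X: "2 + x + y > 0" using x y e by linarith
  have "M*\<epsilon> \<le> M" using mult_left_mono[of \<epsilon> 1 M] M e by simp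
  then have "x \<le> M" using x by linarith
  moreover have "y \<le> 0" using y e by linarith
  ultimately have d: "2*(2+x+y) \<le> 2*(2+M)" by simp
  have "\<epsilon>/(4*(2+M)) = (\<epsilon>/2)/(2*(2+M))" by simp
  also have "\<dots> \<le> (x - y)/(2*(2+x+y))"
    using x y e X d by (intro frac_le) auto
  also have "(x - y)/(2*(2+x+y)) = (1+x)/(2+x+y) - 1/2" using X by (simp add: field_simps)
  finally show ?thesis using X by simp
qed

section \<open>Distributions far from uniform\<close>

locale far_from_uniform =
  fixes n :: nat and p :: "nat \<Rightarrow> real" and \<epsilon> :: real
  assumes two_le_n: "2 \<le> n"
    and p_nonneg: "\<And>l. l \<in> {1..n} \<Longrightarrow> 0 \<le> p l"
    and sum_abs_rel_dev: "(\<Sum>l\<in>{1..n}. \<bar>rel_dev n p l\<bar>) = 2 * \<epsilon> * real n"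
    and sum_rel_dev: "(\<Sum>l\<in>{1..n}. rel_dev n p l) = 0"
    and eps_pos: "0 < \<epsilon>" and eps_le_1: "\<epsilon> \<le> 1"
begin

lemma rel_dev_ge_minus_1: "l \<in> {1..n} \<Longrightarrow> -1 \<le> rel_dev n p l"
  using p_nonneg[of l] unfolding rel_dev_def by simp

definition tame :: "real \<Rightarrow> nat set \<Rightarrow> bool" where
  "tame k T \<longleftrightarrow> T \<noteq> {} \<and> real (card T) \<le> 16 * k \<and> (\<Sum>l\<in>T. \<bar>rel_dev n p l\<bar>) \<le> 64 * \<epsilon> * k"

lemma deviating_outlier:
  assumes S: "S \<subseteq> {1..n}" "i \<in> S" and tame: "tame k (S - {i})"
    and outlier: "128 * \<epsilon> * k \<le> \<bar>rel_dev n p i\<bar>" and k: "k \<ge> 1"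
  shows "deviating n p \<epsilon> (\<epsilon>/12) S"
proof -
  define R where "R = (\<Sum>l\<in>S - {i}. rel_dev n p l)"
  have "finite S" using S finite_subset by blast
  have sum_S: "(\<Sum>l\<in>S. rel_dev n p l) = rel_dev n p i + R"
    unfolding R_def using \<open>finite S\<close> S(2) by (rule sum.remove)
  have card_S: "card S = Suc (card (S - {i}))"
    using \<open>finite S\<close> S(2) by (rule card.remove)
  have "card (S - {i}) \<ge> 1"
    using tame \<open>finite S\<close> unfolding tame_def by (simp add: Suc_leI card_gt_0_iff)
  then have "real (card S) \<ge> 2" "real (card S) \<le> 16 * k + 1"
    using tame card_S unfolding tame_def by auto
  moreover have "\<bar>R\<bar> \<le> 64 * \<epsilon> * k"
    using sum_abs[of "rel_dev n p" "S - {i}"] tame unfolding R_def tame_def by linarith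
  moreover have "-1 \<le> rel_dev n p i" using S by (intro rel_dev_ge_minus_1) auto
  ultimately have dev: "real (card S) + rel_dev n p i + R > 0 \<and>
      \<bar>(1 + rel_dev n p i) / (real (card S) + rel_dev n p i + R) - 1 / real (card S)\<bar> \<ge> \<epsilon>/12"
    using k outlier eps_pos eps_le_1 by (intro ratio_dev_outlier) auto
  have "n \<ge> 1" using two_le_n by simp
  show ?thesis
  proof (rule deviating_if_cond_dev[OF S])
    show "\<epsilon> \<noteq> 0" using eps_pos by simp
    show "mass p S > 0"
      using dev \<open>n \<ge> 1\<close> by (simp add: mass_eq_rel_dev sum_S add.assoc)
    show "\<epsilon>/12 \<le> \<bar>cond p S i - 1 / real (card S)\<bar>"
      using dev \<open>n \<ge> 1\<close> by (simp add: cond_eq_rel_dev sum_S add.assoc)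
  qed
qed

text \<open>
  A remainder fails to be tame if it is empty (probability \<open>\<le> 1/32\<close>) or, by Markov's
  inequality, too large (\<open>\<le> 1/16\<close>) or of too large total deviation (\<open>\<le> 1/32\<close>).
\<close>

lemma bern_prob_tame:
  assumes q: "0 < q" "q \<le> 1/2" and k: "k = q * real n" "k \<ge> 32" and i: "i \<in> {1..n}"
  shows "bern_prob q ({1..n} - {i}) (tame k) \<ge> 7/8"
proof -
  define A where "A = {1..n} - {i}"
  define f where "f T = (\<Sum>l\<in>T. \<bar>rel_dev n p l\<bar>)" for T
  have finA: "finite A" unfolding A_def by simp
  have q1: "0 \<le> q" "q \<le> 1" using q by auto
  have qA: "q * real (card A) = k - q"
    unfolding A_def using i k two_le_n by (simp add: of_nat_diff algebra_simps)
  have "bern_exp q A (\<lambda>T. 1 - of_bool (T = {}) - of_bool (real (card T) > 16*k)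
      - of_bool (f T > 64*\<epsilon>*k)) \<le> bern_prob q A (tame k)"
    using q1 by (intro bern_exp_mono) (auto simp: tame_def f_def not_le)
  then have main: "1 - bern_prob q A (\<lambda>T. T = {}) - bern_prob q A (\<lambda>T. real (card T) > 16*k)
      - bern_prob q A (\<lambda>T. f T > 64*\<epsilon>*k) \<le> bern_prob q A (tame k)"
    by (simp only: bern_exp_diff bern_exp_const finA)
  have "bern_prob q A (\<lambda>T. T = {}) \<le> 1 / (1 + q * real (card A))"
    unfolding bern_prob_empty[OF finA] using q1 by (rule power_one_minus_le_inverse)
  also have "\<dots> \<le> 1/32" using qA q k by (simp add: field_simps)
  finally have empty: "bern_prob q A (\<lambda>T. T = {}) \<le> 1/32" .
  have "bern_prob q A (\<lambda>T. real (card T) > 16*k) \<le> bern_exp q A (\<lambda>T. real (card T)) / (16*k)"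
    using q1 k by (intro bern_prob_markov) auto
  also have "\<dots> = (k - q) / (16*k)" by (simp add: bern_exp_card[OF finA] qA)
  also have "\<dots> \<le> 1/16" using q k by (simp add: field_simps)
  finally have large: "bern_prob q A (\<lambda>T. real (card T) > 16*k) \<le> 1/16" .
  have "(\<Sum>l\<in>A. \<bar>rel_dev n p l\<bar>) \<le> 2*\<epsilon>*n"
    unfolding sum_abs_rel_dev[symmetric] A_def by (intro sum_mono2) auto
  then have "bern_exp q A f \<le> q * (2*\<epsilon>*n)"
    unfolding f_def bern_exp_sum_elems[OF finA] using q by simp
  have "bern_prob q A (\<lambda>T. f T > 64*\<epsilon>*k) \<le> bern_exp q A f / (64*\<epsilon>*k)"
    using q1 k eps_pos unfolding f_def by (intro bern_prob_markov) (auto intro: sum_nonneg)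
  also have "\<dots> \<le> q * (2*\<epsilon>*n) / (64*\<epsilon>*k)"
    using \<open>bern_exp q A f \<le> q * (2*\<epsilon>*n)\<close> eps_pos k by (intro divide_right_mono) auto
  also have "q * (2*\<epsilon>*n) / (64*\<epsilon>*k) = 1/32" using eps_pos q k two_le_n by (simp add: field_simps)
  finally have spread: "bern_prob q A (\<lambda>T. f T > 64*\<epsilon>*k) \<le> 1/32" .
  show ?thesis using main empty large spread unfolding A_def by linarith
qed

lemma bern_prob_deviating_outliers:
  assumes q: "0 < q" "q \<le> 1/2" and k: "k = q * real n" "k \<ge> 32"
    and G: "G \<subseteq> {1..n}" "\<And>i. i \<in> G \<Longrightarrow> 128 * \<epsilon> * k \<le> \<bar>rel_dev n p i\<bar>"
    and qG: "q * real (card G) \<le> 1/2"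
  shows "bern_prob q {1..n} (deviating n p \<epsilon> (\<epsilon>/12)) \<ge> 3/8 * q * real (card G)"
proof -
  define B where "B i S \<longleftrightarrow> i \<in> S \<and> tame k (S - {i}) \<and> (\<forall>l\<in>G - {i}. l \<notin> S)" for i S
  have finG: "finite G" using G finite_subset by blast
  have q1: "0 \<le> q" "q \<le> 1" using q by auto
  have "7/8 * q - q\<^sup>2 * real (card G) \<le> bern_prob q {1..n} (B i)" if "i \<in> G" for i
  proof -
    have "q * (7/8) \<le> q * bern_prob q ({1..n} - {i}) (tame k)"
      using bern_prob_tame[OF q k] that G q by (intro mult_left_mono) auto
    moreover have "q * bern_prob q ({1..n} - {i}) (tame k) - q\<^sup>2 * real (card G)
        \<le> bern_prob q {1..n} (B i)"
      unfolding B_def using that G q1 by (intro bern_prob_isolated_mem) auto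
    ultimately show ?thesis by simp
  qed
  then have "real (card G) * (7/8 * q - q\<^sup>2 * real (card G)) \<le> (\<Sum>i\<in>G. bern_prob q {1..n} (B i))"
    using sum_mono[of G "\<lambda>_. 7/8 * q - q\<^sup>2 * real (card G)"] by simp
  also have "\<dots> \<le> bern_prob q {1..n} (deviating n p \<epsilon> (\<epsilon>/12))"
  proof (rule bern_prob_ge_sum_disjoint[OF finG q1])
    show "deviating n p \<epsilon> (\<epsilon>/12) S" if "S \<subseteq> {1..n}" "i \<in> G" "B i S" for i S
      using that G k by (intro deviating_outlier) (auto simp: B_def)
    show "i = i'" if "i \<in> G" "i' \<in> G" "B i S" "B i' S" for i i' S
      using that by (auto simp: B_def)
  qed
  finally have "(q * real (card G)) * (7/8 - q * real (card G)) \<le> bern_prob q {1..n} (deviating n p \<epsilon> (\<epsilon>/12))"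
    by (simp add: algebra_simps power2_eq_square)
  moreover have "(q * real (card G)) * (3/8) \<le> (q * real (card G)) * (7/8 - q * real (card G))"
    using qG q by (intro mult_left_mono) auto
  ultimately show ?thesis by simp
qed

definition outliers :: "nat \<Rightarrow> nat set" where
  "outliers j = (if real n / 2 ^ j \<ge> 32
     then {i\<in>{1..n}. 128 * \<epsilon> * (real n / 2 ^ j) \<le> \<bar>rel_dev n p i\<bar>} else {})"

lemma outliers_subset: "outliers j \<subseteq> {1..n}"
  unfolding outliers_def by auto

text \<open>If there are too many outliers for the bound above, it is applied to a subset of them.\<close>

lemma bern_prob_deviating_scale:
  assumes j: "j \<ge> 1"
  shows "bern_prob (1 / 2 ^ j) {1..n} (deviating n p \<epsilon> (\<epsilon>/12))
    \<ge> 3/8 * min (real (card (outliers j)) / 2 ^ j) (1/2)"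
proof (cases "real n / 2 ^ j \<ge> 32")
  case False
  then show ?thesis by (simp add: outliers_def bern_exp_nonneg)
next
  case True
  define q :: real where "q = 1 / 2 ^ j"
  define G where "G = outliers j"
  have q: "0 < q" "q \<le> 1/2"
    using power_increasing[of 1 j "2::real"] j unfolding q_def by (auto simp: field_simps)
  have k: "real n / 2 ^ j = q * real n" unfolding q_def by simp
  have G: "G \<subseteq> {1..n}" "\<And>i. i \<in> G \<Longrightarrow> 128 * \<epsilon> * (q * real n) \<le> \<bar>rel_dev n p i\<bar>"
    using True unfolding G_def outliers_def k by auto
  note bound = bern_prob_deviating_outliers[OF q refl True[unfolded k]]
  show ?thesis
  proof (cases "q * real (card G) \<le> 1/2")
    case True
    then show ?thesis
      using bound[OF G] unfolding q_def G_def by (simp add: min_le_iff_disj)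
  next
    case False
    have pow: "(2::real) ^ j = 2 * 2 ^ (j - 1)" using j by (simp add: power_eq_if)
    then have "2 ^ (j - 1) \<le> card G"
      using False unfolding q_def by (simp add: field_simps flip: of_nat_le_iff)
    then obtain G' where G': "G' \<subseteq> G" "card G' = 2 ^ (j - 1)"
      using obtain_subset_with_card_n by metis
    have qG': "q * real (card G') = 1/2" unfolding q_def G'(2) pow by simp
    have "3/8 * q * real (card G') \<le> bern_prob q {1..n} (deviating n p \<epsilon> (\<epsilon>/12))"
      using G G' qG' by (intro bound) auto
    then have "3/8 * (1/2) \<le> bern_prob q {1..n} (deviating n p \<epsilon> (\<epsilon>/12))"
      using qG' by simp
    then show ?thesis unfolding q_def by (simp add: min_le_iff_disj)
  qed
qed

definition heavy :: "nat set" where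
  "heavy = {l\<in>{1..n}. 8192 * \<epsilon> \<le> \<bar>rel_dev n p l\<bar>}"

text \<open>
  Every heavy \<open>l\<close> is an outlier at a scale \<open>j\<close> with \<open>2\<^sup>-\<^sup>j \<ge> |e(l)| / (256 \<epsilon> n)\<close>.
\<close>

lemma sum_outliers_ge:
  assumes heavy_mass: "(\<Sum>l\<in>heavy. \<bar>rel_dev n p l\<bar>) \<ge> \<epsilon> * real n / 2"
  shows "(\<Sum>j\<in>{1..num_scales n}. real (card (outliers j)) / 2 ^ j) \<ge> 1/512"
proof -
  define J where "J = num_scales n"
  define w :: "nat \<Rightarrow> real" where "w l = (\<Sum>j\<in>{1..J}. of_bool (l \<in> outliers j) / 2 ^ j)" for l
  have n0: "real n > 0" using two_le_n by simp
  have "\<bar>rel_dev n p l\<bar> / (256 * \<epsilon> * real n) \<le> w l" if l: "l \<in> heavy" for l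
  proof -
    have "\<bar>rel_dev n p l\<bar> \<le> 2 * \<epsilon> * real n"
      using l unfolding sum_abs_rel_dev[symmetric] heavy_def by (intro member_le_sum) auto
    then obtain j where j: "j \<in> {1..J}" "real n / 2 ^ j \<ge> 32"
        "128 * \<epsilon> * (real n / 2 ^ j) \<le> \<bar>rel_dev n p l\<bar>"
        "1 / 2 ^ j \<ge> \<bar>rel_dev n p l\<bar> / (256 * \<epsilon> * real n)"
      using exists_scale[OF two_le_n eps_pos _ \<open>\<bar>rel_dev n p l\<bar> \<le> 2 * \<epsilon> * real n\<close>] l
      unfolding J_def heavy_def by auto
    then have "l \<in> outliers j" using l unfolding outliers_def heavy_def by auto
    then have "1 / 2 ^ j \<le> w l"
      unfolding w_def using j(1) member_le_sum[of j "{1..J}" "\<lambda>j. of_bool (l \<in> outliers j) / (2::real) ^ j"]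
      by simp
    with j(4) show ?thesis by linarith
  qed
  then have "(\<Sum>l\<in>heavy. \<bar>rel_dev n p l\<bar>) / (256 * \<epsilon> * real n) \<le> (\<Sum>l\<in>heavy. w l)"
    by (simp add: sum_divide_distrib sum_mono)
  have "1/512 = (\<epsilon> * real n / 2) / (256 * \<epsilon> * real n)" using eps_pos n0 by simp
  also have "\<dots> \<le> (\<Sum>l\<in>heavy. \<bar>rel_dev n p l\<bar>) / (256 * \<epsilon> * real n)"
    using heavy_mass eps_pos n0 by (intro divide_right_mono) auto
  also have "\<dots> \<le> (\<Sum>l\<in>heavy. w l)" by fact
  also have "\<dots> \<le> (\<Sum>l\<in>{1..n}. w l)"
    unfolding w_def heavy_def by (intro sum_mono2) (auto intro: sum_nonneg)
  also have "\<dots> = (\<Sum>j\<in>{1..J}. real (card (outliers j)) / 2 ^ j)"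
    unfolding w_def using outliers_subset
    by (subst sum.swap) (simp add: sum_divide_distrib[symmetric] Int_absorb1)
  finally show ?thesis unfolding J_def .
qed

lemma heavy_case:
  assumes "(\<Sum>l\<in>heavy. \<bar>rel_dev n p l\<bar>) \<ge> \<epsilon> * real n / 2"
  shows "(\<Sum>j\<in>{1..num_scales n}. bern_prob (1 / 2 ^ j) {1..n} (deviating n p \<epsilon> (\<epsilon>/12))) \<ge> 3/4096"
proof -
  define a where "a j = real (card (outliers j)) / 2 ^ j" for j :: nat
  have "3/8 * min (\<Sum>j\<in>{1..num_scales n}. a j) (1/2) \<le> 3/8 * (\<Sum>j\<in>{1..num_scales n}. min (a j) (1/2))"
    by (intro mult_left_mono sum_min_ge_min_sum) (auto simp: a_def)
  also have "\<dots> \<le> (\<Sum>j\<in>{1..num_scales n}. bern_prob (1 / 2 ^ j) {1..n} (deviating n p \<epsilon> (\<epsilon>/12)))"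
    unfolding sum_distrib_left a_def by (intro sum_mono bern_prob_deviating_scale) auto
  finally show ?thesis using sum_outliers_ge[OF assms] unfolding a_def by linarith
qed

lemma deviating_pair:
  assumes a: "a \<in> {1..n}" "\<epsilon>/4 \<le> rel_dev n p a" "rel_dev n p a \<le> M * \<epsilon>"
    and b: "b \<in> {1..n}" "rel_dev n p b \<le> -\<epsilon>/4" and M: "M \<ge> 0"
  shows "deviating n p \<epsilon> (\<epsilon> / (4 * (2 + M))) {a, b}"
proof -
  have "a \<noteq> b" using a b eps_pos by auto
  have "-1 \<le> rel_dev n p b" using b by (intro rel_dev_ge_minus_1)
  then have dev: "2 + rel_dev n p a + rel_dev n p b > 0 \<and>
      \<bar>(1 + rel_dev n p a) / (2 + rel_dev n p a + rel_dev n p b) - 1/2\<bar> \<ge> \<epsilon> / (4 * (2 + M))"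
    using a b M eps_pos eps_le_1 by (intro ratio_dev_pair) auto
  have "n \<ge> 1" using two_le_n by simp
  show ?thesis
  proof (rule deviating_if_cond_dev)
    show "{a, b} \<subseteq> {1..n}" "a \<in> {a, b}" using a b by auto
    show "\<epsilon> \<noteq> 0" using eps_pos by simp
    show "mass p {a, b} > 0"
      using dev \<open>n \<ge> 1\<close> \<open>a \<noteq> b\<close> by (simp add: mass_eq_rel_dev add.assoc)
    show "\<epsilon> / (4 * (2 + M)) \<le> \<bar>cond p {a, b} a - 1 / real (card {a, b})\<bar>"
      using dev \<open>n \<ge> 1\<close> \<open>a \<noteq> b\<close> by (simp add: cond_eq_rel_dev add.assoc)
  qed
qed

lemma bern_prob_deviating_pairs:
  assumes M: "M \<ge> 0" and q: "0 < q" "q * real n \<le> 1/2"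
    and P: "P \<subseteq> {1..n}" "\<And>a. a \<in> P \<Longrightarrow> \<epsilon>/4 \<le> rel_dev n p a \<and> rel_dev n p a \<le> M * \<epsilon>"
    and Q: "Q \<subseteq> {1..n}" "\<And>b. b \<in> Q \<Longrightarrow> rel_dev n p b \<le> -\<epsilon>/4"
  shows "bern_prob q {1..n} (deviating n p \<epsilon> (\<epsilon> / (4 * (2 + M)))) \<ge> real (card P) * real (card Q) * q\<^sup>2 / 2"
proof -
  have finPQ: "finite (P \<times> Q)" using P Q finite_subset by blast
  have disj: "a \<noteq> b" if "a \<in> P" "b \<in> Q" for a b using that P Q eps_pos by force
  have "q * 1 \<le> q * real n" using q(1) two_le_n by (intro mult_left_mono) auto
  then have q1: "0 \<le> q" "q \<le> 1" using q by linarith+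
  have "real (card P) * real (card Q) * q\<^sup>2 / 2 = (\<Sum>x\<in>P \<times> Q. q\<^sup>2 / 2)"
    by (simp add: card_cartesian_product)
  also have "\<dots> \<le> (\<Sum>x\<in>P \<times> Q. bern_prob q {1..n} (\<lambda>S. S = {fst x, snd x}))"
  proof (rule sum_mono)
    fix x assume x: "x \<in> P \<times> Q"
    then have "{fst x, snd x} \<subseteq> {1..n}" using P Q by auto
    moreover have "fst x \<noteq> snd x" using x disj by auto
    ultimately show "q\<^sup>2 / 2 \<le> bern_prob q {1..n} (\<lambda>S. S = {fst x, snd x})"
      using bern_weight_pair_ge[of "fst x" "snd x" q "{1..n}"] q q1 by (simp add: bern_prob_eq)
  qed
  also have "\<dots> \<le> bern_prob q {1..n} (deviating n p \<epsilon> (\<epsilon> / (4 * (2 + M))))"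
  proof (rule bern_prob_ge_sum_disjoint[OF finPQ q1])
    show "deviating n p \<epsilon> (\<epsilon> / (4 * (2 + M))) S" if "x \<in> P \<times> Q" "S = {fst x, snd x}" for x S
    proof -
      have "fst x \<in> P" "snd x \<in> Q" using that(1) by auto
      then show ?thesis unfolding that(2) using P Q M by (intro deviating_pair) auto
    qed
    show "x = y" if "x \<in> P \<times> Q" "y \<in> P \<times> Q" "S = {fst x, snd x}" "S = {fst y, snd y}" for x y S
      using that disj by (auto simp: doubleton_eq_iff prod_eq_iff)
  qed
  finally show ?thesis .
qed

text \<open>
  Let \<open>f = \<plusminus>e\<close>. Outside \<open>heavy\<close> the positive part of \<open>f\<close> is below \<open>\<epsilon>/4\<close> or at most
  \<open>8192 \<epsilon>\<close>, and it sums to \<open>\<epsilon> n\<close> since \<open>\<Sum> e = 0\<close>.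
\<close>

lemma card_moderate_ge:
  assumes light: "(\<Sum>l\<in>heavy. \<bar>rel_dev n p l\<bar>) < \<epsilon> * real n / 2"
    and f: "f = rel_dev n p \<or> f = (\<lambda>l. - rel_dev n p l)"
  shows "real (card {l\<in>{1..n}. \<epsilon>/4 \<le> f l \<and> f l \<le> 8192 * \<epsilon>}) \<ge> real n / 32768"
proof -
  define P where "P = {l\<in>{1..n}. \<epsilon>/4 \<le> f l \<and> f l \<le> 8192 * \<epsilon>}"
  have abs_f: "\<bar>f l\<bar> = \<bar>rel_dev n p l\<bar>" for l using f by auto
  have "(\<Sum>l\<in>{1..n}. f l) = 0" using f sum_rel_dev by (auto simp: sum_negf)
  then have "\<epsilon> * real n = (\<Sum>l\<in>{1..n}. (\<bar>f l\<bar> + f l) / 2)"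
    using sum_abs_rel_dev by (simp add: abs_f sum.distrib sum_divide_distrib[symmetric])
  also have "\<dots> \<le> (\<Sum>l\<in>{1..n}. of_bool (l \<in> heavy) * \<bar>rel_dev n p l\<bar> + of_bool (l \<in> P) * (8192 * \<epsilon>) + \<epsilon>/4)"
  proof (rule sum_mono)
    fix l assume l: "l \<in> {1..n}"
    show "(\<bar>f l\<bar> + f l) / 2 \<le> of_bool (l \<in> heavy) * \<bar>rel_dev n p l\<bar> + of_bool (l \<in> P) * (8192 * \<epsilon>) + \<epsilon>/4"
    proof (cases "l \<in> heavy")
      case True
      have "f l \<le> \<bar>rel_dev n p l\<bar>" using abs_f[of l] by (metis abs_ge_self)
      then show ?thesis using True eps_pos by (cases "l \<in> P") auto
    next
      case False
      then have "\<bar>f l\<bar> < 8192 * \<epsilon>" using l abs_f[of l] unfolding heavy_def by auto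
      then show ?thesis using False l eps_pos unfolding P_def by (cases "\<epsilon>/4 \<le> f l") auto
    qed
  qed
  also have "\<dots> = (\<Sum>l\<in>heavy. \<bar>rel_dev n p l\<bar>) + real (card P) * (8192 * \<epsilon>) + real n * (\<epsilon>/4)"
    by (simp add: sum.distrib heavy_def P_def Int_def sum_distrib_right[symmetric] conj_commute)
  finally have "\<epsilon> * real n / 4 < \<epsilon> * (8192 * real (card P))" using light by (simp add: algebra_simps)
  then show ?thesis using eps_pos unfolding P_def by simp
qed

lemma light_case:
  assumes n: "n \<ge> 4" and light: "(\<Sum>l\<in>heavy. \<bar>rel_dev n p l\<bar>) < \<epsilon> * real n / 2"
  shows "(\<Sum>j\<in>{1..num_scales n}. bern_prob (1 / 2 ^ j) {1..n} (deviating n p \<epsilon> (\<epsilon> / 32776))) \<ge> 1 / 2 ^ 35"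
proof -
  define P where "P = {l\<in>{1..n}. \<epsilon>/4 \<le> rel_dev n p l \<and> rel_dev n p l \<le> 8192 * \<epsilon>}"
  define Q where "Q = {l\<in>{1..n}. \<epsilon>/4 \<le> - rel_dev n p l \<and> - rel_dev n p l \<le> 8192 * \<epsilon>}"
  have n0: "real n > 0" using n by simp
  have cards: "real (card P) \<ge> real n / 32768" "real (card Q) \<ge> real n / 32768"
    unfolding P_def Q_def
    using card_moderate_ge[OF light, of "rel_dev n p"] card_moderate_ge[OF light, of "\<lambda>l. - rel_dev n p l"]
    by auto
  obtain j0 where j0: "2 * real n \<le> 2 ^ j0" "2 ^ j0 < 2 * (2 * real n)"
    using exists_power2_between[of "2 * real n"] n by auto
  define q :: real where "q = 1 / 2 ^ j0"
  have q: "0 < q" "q * real n \<le> 1/2" "q \<ge> 1 / (4 * real n)"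
    unfolding q_def using j0 n0 by (auto simp: field_simps)
  have "j0 \<in> {1..num_scales n}"
  proof -
    have "j0 \<noteq> 0" using j0(1) n by (intro notI) simp
    moreover have "4 * real n \<le> real n * real n" using n by (intro mult_right_mono) auto
    then have "(2::real) ^ j0 < real n ^ 2" using j0(2) by (simp add: power2_eq_square)
    then have "j0 \<le> num_scales n" using n by (intro le_num_scales) auto
    ultimately show ?thesis by simp
  qed
  have "1 / 2 ^ 35 = (real n / 32768) * (real n / 32768) * (1 / (4 * real n))\<^sup>2 / 2"
    using n0 by (simp add: power2_eq_square)
  also have "\<dots> \<le> real (card P) * real (card Q) * q\<^sup>2 / 2"
    using cards q n0 by (intro divide_right_mono mult_mono power_mono) auto
  also have "\<dots> \<le> bern_prob q {1..n} (deviating n p \<epsilon> (\<epsilon> / (4 * (2 + 8192))))"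
    by (rule bern_prob_deviating_pairs[OF _ q(1,2)]) (auto simp: P_def Q_def)
  also have "\<dots> \<le> (\<Sum>j\<in>{1..num_scales n}. bern_prob (1 / 2 ^ j) {1..n} (deviating n p \<epsilon> (\<epsilon> / (4 * (2 + 8192)))))"
    unfolding q_def using \<open>j0 \<in> {1..num_scales n}\<close>
    by (intro member_le_sum) (auto intro: bern_exp_nonneg)
  finally show ?thesis by simp
qed

lemma sum_bern_prob_deviating_ge:
  assumes "n \<ge> 4"
  shows "(\<Sum>j\<in>{1..num_scales n}. bern_prob (1 / 2 ^ j) {1..n} (deviating n p \<epsilon> (\<epsilon> / 65536))) \<ge> 1 / 2 ^ 35"
proof -
  have mono: "(\<Sum>j\<in>{1..num_scales n}. bern_prob (1 / 2 ^ j) {1..n} (deviating n p \<epsilon> c))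
      \<le> (\<Sum>j\<in>{1..num_scales n}. bern_prob (1 / 2 ^ j) {1..n} (deviating n p \<epsilon> (\<epsilon> / 65536)))"
    if "\<epsilon> / 65536 \<le> c" for c
    using that by (intro sum_mono bern_prob_mono) (auto elim: deviating_mono)
  show ?thesis
  proof (cases "(\<Sum>l\<in>heavy. \<bar>rel_dev n p l\<bar>) \<ge> \<epsilon> * real n / 2")
    case True
    have "1 / 2 ^ 35 \<le> (3 / 4096 :: real)" "\<epsilon> / 65536 \<le> \<epsilon> / 12" using eps_pos by simp_all
    then show ?thesis using heavy_case[OF True] mono[of "\<epsilon> / 12"] by linarith
  next
    case False
    have "\<epsilon> / 65536 \<le> \<epsilon> / 32776" using eps_pos by simp
    then show ?thesis using light_case[OF assms] False mono[of "\<epsilon> / 32776"] by linarith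
  qed
qed

lemma rand_set_prob_deviating_ge:
  assumes "n \<ge> 4"
  shows "rand_set_prob n (deviating n p \<epsilon> (\<epsilon> / 65536)) \<ge> (1 / 2 ^ 36) / log 2 (real n)"
proof -
  have "log 2 (real n) > 0" using two_le_n by simp
  have "(1 / 2 ^ 36) / log 2 (real n) = (1 / (2 * log 2 (real n))) * (1 / 2 ^ 35)" by simp
  also have "\<dots> \<le> (1 / real (num_scales n)) *
      (\<Sum>j\<in>{1..num_scales n}. bern_prob (1 / 2 ^ j) {1..n} (deviating n p \<epsilon> (\<epsilon> / 65536)))"
    using num_scales_bounds[OF two_le_n] sum_bern_prob_deviating_ge[OF assms] \<open>log 2 (real n) > 0\<close>
    by (intro mult_mono divide_left_mono) auto
  finally show ?thesis by (simp add: rand_set_prob_eq_bern_prob)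
qed

end

lemma far_from_uniformI:
  assumes "n \<ge> 2" "is_dist n p" "dTV n p (unif n) = \<epsilon>" "0 < \<epsilon>" "\<epsilon> \<le> 1"
  shows "far_from_uniform n p \<epsilon>"
proof
  have "\<bar>rel_dev n p l\<bar> = real n * \<bar>p l - unif n l\<bar>" if "l \<in> {1..n}" for l
  proof -
    have "rel_dev n p l = real n * (p l - unif n l)"
      using that assms(1) by (simp add: rel_dev_def unif_def field_simps)
    then show ?thesis by (simp add: abs_mult)
  qed
  then show "(\<Sum>l\<in>{1..n}. \<bar>rel_dev n p l\<bar>) = 2 * \<epsilon> * real n"
    using assms(3) by (simp add: dTV_def sum_distrib_left[symmetric])
  show "(\<Sum>l\<in>{1..n}. rel_dev n p l) = 0"
    using assms(2) by (simp add: is_dist_def rel_dev_def sum_subtractf sum_distrib_left[symmetric])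
  show "0 \<le> p l" if "l \<in> {1..n}" for l
    using assms(2) that by (simp add: is_dist_def)
qed (use assms in auto)

lemma rand_set_prob_deviating_if_far:
  assumes "4 \<le> n" "is_dist n p" "dTV n p (unif n) = \<epsilon>" "0 < \<epsilon>" "\<epsilon> \<le> 1"
  shows "rand_set_prob n (deviating n p \<epsilon> (1 / 65536 * \<epsilon>)) \<ge> 1 / 2 ^ 36 / log 2 (real n)"
proof -
  interpret far_from_uniform n p \<epsilon> using assms by (intro far_from_uniformI) auto
  show ?thesis using rand_set_prob_deviating_ge[OF assms(1)] by simp
qed

theorem lemma4p1:
  "\<exists>c1 c2::real. c1 > 0 \<and> c2 > 0 \<and> (\<exists>N::nat. \<forall>n\<ge>N. \<forall>\<epsilon>::real. 0 < \<epsilon> \<and> \<epsilon> \<le> 1 \<longrightarrow>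
     (\<forall>p. is_dist n p \<and> dTV n p (unif n) = \<epsilon> \<longrightarrow>
       (let z = (\<lambda>i. (p i - unif n i) / \<epsilon>) in
        rand_set_prob n (\<lambda>S. mass p S > 0 \<and> (\<exists>i\<in>S.
            \<bar>(unif n i + \<epsilon> * z i) / (mass (unif n) S + \<epsilon> * mass z S) - unif n i / mass (unif n) S\<bar> \<ge> c2 * \<epsilon>
          \<and> \<bar>cond p S i - 1 / real (card S)\<bar> \<ge> c2 * \<epsilon>))
        \<ge> c1 / log 2 (real n))))"
  unfolding Let_def
  by (intro exI[of _ "1 / 2 ^ 36"] exI[of _ "1 / 65536"] exI[of _ 4] conjI allI impI;
      (rule rand_set_prob_deviating_if_far[unfolded deviating_def Let_def])?) auto

end
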